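(* Let $m,n$ be positive integers. Let $A, X$ be real symmetric $m\times m$ matrices and let $S_0,S_1,\ldots,S_{n-1},T$ be real symmetric $n\times n$ matrices such that \begin{itemize} \item $A\circ X = I_m\circ X = 0$ and $AX-XA=0$; \item $S_iT-TS_i=0$ for $i=0,1,\ldots,n-1$, and $S_i\circ T=0$ for $i=2,\ldots,n-1$. \end{itemize} Then the $mn\times mn$ matrices $\hat A=\sum_{j=0}^{n-1}(S_j\otimes A^j)$ (with $A^0=I_m$) and $\hat X=T\otimes X$ satisfy \[\hat A\circ \hat X = I_{mn}\circ \hat X = 0 \quad\text{and}\quad \hat A\hat X-\hat X\hat A=0.\]
   Context: $\circ$ denotes the entrywise (Hadamard) product and $\otimes$ the Kronecker product: for $P=(p_{ij})$, $P\otimes Q$ is the block matrix whose $(i,j)$ block is $p_{ij}Q$. $I_k$ is the $k\times k$ identity matrix. *)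

theory Defs
  imports "HOL-Analysis.Analysis"
begin

definition hadamard :: "real^'n^'n \<Rightarrow> real^'n^'n \<Rightarrow> real^'n^'n" where
  "hadamard P Q = (\<chi> i j. P $ i $ j * Q $ i $ j)"

text \<open>Kronecker product: rows/columns indexed by pairs (i,k), the (i,j) block is p_ij Q.\<close>
definition kron :: "real^'n^'n \<Rightarrow> real^'m^'m \<Rightarrow> real^('n \<times> 'm)^('n \<times> 'm)" where
  "kron P Q = (\<chi> r c. P $ fst r $ fst c * Q $ snd r $ snd c)"

primrec matpow :: "real^'n^'n \<Rightarrow> nat \<Rightarrow> real^'n^'n" where
  "matpow A 0 = mat 1"
| "matpow A (Suc k) = A ** matpow A k"

definition symmetric_mat :: "real^'n^'n \<Rightarrow> bool" where
  "symmetric_mat A \<longleftrightarrow> transpose A = A"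

end

theory Submission
  imports Defs
begin

text \<open>Both conditions are checked summand by summand. The Hadamard and the ordinary
  product factor over the Kronecker product, so the j-th summand of the Hadamard product
  is the Kronecker product of S_j \<circ> T and A^j \<circ> X, which vanishes through the
  first factor for j \<ge> 2 and through the second for j = 0, 1; and the j-th summand of
  the commutator vanishes because S_j commutes with T and A^j with X.\<close>

lemma hadamard_kron: "hadamard (kron P Q) (kron R W) = kron (hadamard P R) (hadamard Q W)"
  by (simp add: hadamard_def kron_def vec_eq_iff)

lemma hadamard_sum_left: "hadamard (sum f I) Y = (\<Sum>j\<in>I. hadamard (f j) Y)"
  by (induction I rule: infinite_finite_induct)
     (auto simp: hadamard_def vec_eq_iff algebra_simps)

lemma kron_zero_left [simp]: "kron 0 Q = 0"
  and kron_zero_right [simp]: "kron P 0 = 0"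
  by (simp_all add: kron_def vec_eq_iff)

lemma kron_mat_1: "kron (mat 1) (mat 1) = mat 1"
  by (simp add: kron_def vec_eq_iff mat_def prod_eq_iff)

lemma hadamard_kron_eq_0:
  assumes "hadamard P R = 0 \<or> hadamard Q W = 0"
  shows "hadamard (kron P Q) (kron R W) = 0"
  using assms by (auto simp: hadamard_kron)

lemma kron_matrix_mult: "kron P Q ** kron R W = kron (P ** R) (Q ** W)"
proof -
  have "(\<Sum>r\<in>UNIV. P $ i $ fst r * Q $ k $ snd r * (R $ fst r $ j * W $ snd r $ l))
      = (\<Sum>a\<in>UNIV. P $ i $ a * R $ a $ j) * (\<Sum>b\<in>UNIV. Q $ k $ b * W $ b $ l)"
    for i j k l
  proof -
    have "(\<Sum>r\<in>UNIV. P $ i $ fst r * Q $ k $ snd r * (R $ fst r $ j * W $ snd r $ l))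
       = (\<Sum>a\<in>UNIV. \<Sum>b\<in>UNIV. P $ i $ a * Q $ k $ b * (R $ a $ j * W $ b $ l))"
      by (simp add: sum.cartesian_product split_beta)
    also have "\<dots> = (\<Sum>a\<in>UNIV. P $ i $ a * R $ a $ j) * (\<Sum>b\<in>UNIV. Q $ k $ b * W $ b $ l)"
      by (simp add: sum_product algebra_simps)
    finally show ?thesis .
  qed
  then show ?thesis
    by (simp add: vec_eq_iff kron_def matrix_matrix_mult_def)
qed

lemma kron_commute:
  assumes "P ** R = R ** P" and "Q ** W = W ** Q"
  shows "kron P Q ** kron R W = kron R W ** kron P Q"
  using assms by (simp add: kron_matrix_mult)

lemma matrix_add_rdistrib: "(B + C) ** A = B ** A + C ** A"
  by (vector matrix_matrix_mult_def sum.distrib[symmetric] field_simps)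

lemma sum_matrix_mult: "sum f I ** M = (\<Sum>j\<in>I. f j ** M)"
  by (induction I rule: infinite_finite_induct) (auto simp: matrix_add_rdistrib)

lemma matrix_mult_sum: "M ** sum f I = (\<Sum>j\<in>I. M ** f j)"
  by (induction I rule: infinite_finite_induct) (auto simp: matrix_add_ldistrib)

lemma sum_commute_matrix:
  assumes "\<And>j. j \<in> I \<Longrightarrow> f j ** M = M ** f j"
  shows "sum f I ** M = M ** sum f I"
  using assms by (simp add: sum_matrix_mult matrix_mult_sum)

lemma matpow_commute:
  assumes "A ** X = X ** A"
  shows "matpow A j ** X = X ** matpow A j"
proof (induction j)
  case 0
  then show ?case by simp
next
  case (Suc j)
  have "matpow A (Suc j) ** X = A ** (matpow A j ** X)"
    by (simp add: matrix_mul_assoc)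
  also have "\<dots> = (A ** X) ** matpow A j"
    using Suc by (simp add: matrix_mul_assoc)
  also have "\<dots> = X ** matpow A (Suc j)"
    using assms by (simp add: matrix_mul_assoc)
  finally show ?case .
qed

theorem lemma2p2:
  fixes A X :: "real^'m^'m" and S :: "nat \<Rightarrow> real^'n^'n" and T :: "real^'n^'n"
  assumes "symmetric_mat A" and "symmetric_mat X"
    and "\<And>i. i < CARD('n) \<Longrightarrow> symmetric_mat (S i)" and "symmetric_mat T"
    and "hadamard A X = 0" and "hadamard (mat 1) X = 0" and "A ** X - X ** A = 0"
    and "\<And>i. i < CARD('n) \<Longrightarrow> S i ** T - T ** S i = 0"
    and "\<And>i. 2 \<le> i \<Longrightarrow> i < CARD('n) \<Longrightarrow> hadamard (S i) T = 0"
  shows "hadamard (\<Sum>j<CARD('n). kron (S j) (matpow A j)) (kron T X) = 0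
       \<and> hadamard (mat 1) (kron T X) = 0
       \<and> (\<Sum>j<CARD('n). kron (S j) (matpow A j)) ** kron T X
           - kron T X ** (\<Sum>j<CARD('n). kron (S j) (matpow A j)) = 0"
proof (intro conjI)
  have "hadamard (S j) T = 0 \<or> hadamard (matpow A j) X = 0" if "j < CARD('n)" for j
  proof (cases "j < 2")
    case True
    then have "j = 0 \<or> j = 1" by auto
    with assms(5,6) show ?thesis by auto
  next
    case False
    with assms(9) that show ?thesis by auto
  qed
  then show "hadamard (\<Sum>j<CARD('n). kron (S j) (matpow A j)) (kron T X) = 0"
    by (simp add: hadamard_sum_left hadamard_kron_eq_0)
  show "hadamard (mat 1) (kron T X) = 0"
    by (metis kron_mat_1 hadamard_kron_eq_0 assms(6))
  have "A ** X = X ** A" using assms(7) by simp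
  then have "kron (S j) (matpow A j) ** kron T X = kron T X ** kron (S j) (matpow A j)"
    if "j \<in> {..<CARD('n)}" for j
    using assms(8) that by (simp add: kron_commute matpow_commute)
  then have "(\<Sum>j<CARD('n). kron (S j) (matpow A j)) ** kron T X
           = kron T X ** (\<Sum>j<CARD('n). kron (S j) (matpow A j))"
    by (rule sum_commute_matrix)
  then show "(\<Sum>j<CARD('n). kron (S j) (matpow A j)) ** kron T X
           - kron T X ** (\<Sum>j<CARD('n). kron (S j) (matpow A j)) = 0"
    by simp
qed

end
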